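(* Let $\rho$ be a left-c.e. semi-measure. If $X\in2^\omega$ is computable and $X\in\mathsf{W2R}_\rho$, then $\inf_n\rho(X{\upharpoonright}n)>0$.
   Context: $2^{<\omega}$ is the set of finite binary strings, $\varepsilon$ the empty string, $X{\upharpoonright}n$ the first $n$ bits of $X$, $[\![\sigma]\!]=\{X\in2^\omega:\sigma\preceq X\}$, $[\![S]\!]=\bigcup_{\sigma\in S}[\![\sigma]\!]$. A semi-measure is $\rho:2^{<\omega}\to[0,1]$ with $\rho(\varepsilon)=1$ and $\rho(\sigma)\ge\rho(\sigma0)+\rho(\sigma1)$; left-c.e. means its values are uniformly approximable from below by computable non-decreasing rational sequences. For $E\subseteq2^{<\omega}$, $\rho(E)=\sum_{\sigma\in E}\rho(\sigma)$. $X\in\mathsf{W2R}_\rho$ iff $X\notin\bigcap_i[\![U_i]\!]$ for every uniformly c.e. sequence $(U_i)$ of subsets of $2^{<\omega}$ with $\lim_i\rho(U_i)=0$. *)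

theory Defs
  imports "HOL-Analysis.Analysis" "HOL-Library.Nat_Bijection" "HOL-Library.Extended_Nonnegative_Real"
begin

datatype recf = Zf | Sf | Proj nat | Cn recf "recf list" | Pr recf recf | Mn recf

inductive eval :: "recf \<Rightarrow> nat list \<Rightarrow> nat \<Rightarrow> bool" where
  eval_Z: "eval Zf xs 0"
| eval_S: "eval Sf (x # xs) (Suc x)"
| eval_Proj: "i < length xs \<Longrightarrow> eval (Proj i) xs (xs ! i)"
| eval_Cn: "list_all2 (\<lambda>g y. eval g xs y) gs ys \<Longrightarrow> eval f ys z \<Longrightarrow> eval (Cn f gs) xs z"
| eval_Pr0: "eval f xs y \<Longrightarrow> eval (Pr f g) (0 # xs) y"
| eval_PrS: "eval (Pr f g) (n # xs) r \<Longrightarrow> eval g (r # n # xs) y \<Longrightarrow> eval (Pr f g) (Suc n # xs) y"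
| eval_Mn: "eval f (n # xs) 0 \<Longrightarrow> (\<forall>m<n. \<exists>y. eval f (m # xs) y \<and> y \<noteq> 0) \<Longrightarrow> eval (Mn f) xs n"

text \<open>Bijective coding of finite binary strings (False = bit 0, True = bit 1) by naturals.\<close>
fun str_code :: "bool list \<Rightarrow> nat" where
  "str_code [] = 0"
| "str_code (b # s) = 2 * str_code s + (if b then 2 else 1)"

text \<open>Coding of rationals by naturals (surjective onto the rationals).\<close>
definition rat_code :: "nat \<Rightarrow> real" where
  "rat_code n = (case prod_decode n of (a, b) \<Rightarrow> real_of_int (int_decode a) / real (Suc b))"

definition computable_seq :: "(nat \<Rightarrow> bool) \<Rightarrow> bool" where
  "computable_seq X \<longleftrightarrow> (\<exists>c. \<forall>n. eval c [n] (if X n then 1 else 0))"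

definition left_ce :: "(bool list \<Rightarrow> real) \<Rightarrow> bool" where
  "left_ce \<rho> \<longleftrightarrow> (\<exists>c. (\<forall>\<sigma> s. \<exists>y. eval c [str_code \<sigma>, s] y) \<and>
     (\<forall>\<sigma>. let q = (\<lambda>s. rat_code (THE y. eval c [str_code \<sigma>, s] y)) in
            incseq q \<and> q \<longlonglongrightarrow> \<rho> \<sigma>))"

definition uniformly_ce :: "(nat \<Rightarrow> bool list set) \<Rightarrow> bool" where
  "uniformly_ce U \<longleftrightarrow> (\<exists>c. \<forall>i \<sigma>. \<sigma> \<in> U i \<longleftrightarrow> (\<exists>y. eval c [i, str_code \<sigma>] y))"

definition semimeasure :: "(bool list \<Rightarrow> real) \<Rightarrow> bool" where
  "semimeasure \<rho> \<longleftrightarrow> (\<forall>\<sigma>. 0 \<le> \<rho> \<sigma> \<and> \<rho> \<sigma> \<le> 1) \<and> \<rho> [] = 1 \<and>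
     (\<forall>\<sigma>. \<rho> (\<sigma> @ [False]) + \<rho> (\<sigma> @ [True]) \<le> \<rho> \<sigma>)"

definition rho_set :: "(bool list \<Rightarrow> real) \<Rightarrow> bool list set \<Rightarrow> ennreal" where
  "rho_set \<rho> E = infsum (\<lambda>\<sigma>. ennreal (\<rho> \<sigma>)) E"

definition restr :: "(nat \<Rightarrow> bool) \<Rightarrow> nat \<Rightarrow> bool list" where
  "restr X n = map X [0..<n]"

definition cyl :: "bool list \<Rightarrow> (nat \<Rightarrow> bool) set" where
  "cyl \<sigma> = {X. restr X (length \<sigma>) = \<sigma>}"

definition cyl_set :: "bool list set \<Rightarrow> (nat \<Rightarrow> bool) set" where
  "cyl_set S = (\<Union>\<sigma>\<in>S. cyl \<sigma>)"

definition W2R :: "(bool list \<Rightarrow> real) \<Rightarrow> (nat \<Rightarrow> bool) set" where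
  "W2R \<rho> = {X. \<forall>U. uniformly_ce U \<and> (\<lambda>i. rho_set \<rho> (U i)) \<longlonglongrightarrow> 0 \<longrightarrow>
                    X \<notin> (\<Inter>i. cyl_set (U i))}"

end

theory Submission
  imports Defs
begin

text \<open>If \<open>X\<close> is computable, then the sets \<open>U\<^sub>i = {X\<restriction>i}\<close> form a uniformly c.e. sequence
  (enumerate the \<open>i\<close>-th prefix of \<open>X\<close> and halt on input \<open>\<sigma>\<close> exactly when \<open>\<sigma>\<close> equals it) with
  \<open>\<rho>(U\<^sub>i) = \<rho>(X\<restriction>i)\<close> and \<open>X \<in> \<Inter>\<^sub>i [U\<^sub>i]\<close>. The values \<open>\<rho>(X\<restriction>n)\<close> decrease, so they
  converge to their infimum; if that infimum were \<open>0\<close>, then \<open>(U\<^sub>i)\<close> would be a test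
  capturing \<open>X\<close>, contradicting \<open>X \<in> W2R\<^sub>\<rho>\<close>.\<close>

lemma eval_list_all2_unique:
  "list_all2 (\<lambda>g y. eval g xs y \<and> (\<forall>z. eval g xs z \<longrightarrow> y = z)) gs ys \<Longrightarrow>
   list_all2 (\<lambda>g y. eval g xs y) gs ys' \<Longrightarrow> ys = ys'"
proof (induction gs arbitrary: ys ys')
  case Nil
  then show ?case by simp
next
  case (Cons g gs)
  then show ?case by (cases ys; cases ys') auto
qed

lemma eval_deterministic: "eval f xs y \<Longrightarrow> eval f xs z \<Longrightarrow> y = z"
proof (induction arbitrary: z rule: eval.induct)
  case (eval_Cn xs gs ys f w)
  from eval_Cn.prems obtain ys' where ys': "list_all2 (\<lambda>g y. eval g xs y) gs ys'" "eval f ys' z"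
    by (cases rule: eval.cases) auto
  have "ys = ys'" using eval_Cn.IH(1) ys'(1) by (rule eval_list_all2_unique)
  then show ?case using eval_Cn.IH(2) ys'(2) by auto
next
  case (eval_Mn f n xs)
  from eval_Mn.prems obtain n' where n': "z = n'" "eval f (n' # xs) 0"
    "\<forall>m<n'. \<exists>y. eval f (m # xs) y \<and> y \<noteq> 0"
    by (cases rule: eval.cases) auto
  show ?case
  proof (rule linorder_cases[of n n'])
    assume "n < n'"
    then show ?thesis using n' eval_Mn.IH by force
  next
    assume "n' < n"
    then show ?thesis using n' eval_Mn.IH by metis
  qed (use n' in simp)
next
  case eval_Z
  from eval_Z.prems show ?case by (cases rule: eval.cases) auto
next
  case eval_S
  from eval_S.prems show ?case by (cases rule: eval.cases) auto
next
  case eval_Proj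
  from eval_Proj.prems show ?case by (cases rule: eval.cases) auto
next
  case eval_Pr0
  from eval_Pr0.prems show ?case by (cases rule: eval.cases) (use eval_Pr0.IH in auto)
next
  case eval_PrS
  from eval_PrS.prems show ?case by (cases rule: eval.cases) (use eval_PrS.IH in auto)
qed

lemma eval_ProjI: "i < length xs \<Longrightarrow> y = xs ! i \<Longrightarrow> eval (Proj i) xs y"
  using eval_Proj by simp

lemma eval_SI: "y = Suc x \<Longrightarrow> eval Sf (x # xs) y"
  using eval_S by simp

lemma eval_Cn1: "eval g xs y \<Longrightarrow> eval f [y] z \<Longrightarrow> eval (Cn f [g]) xs z"
  by (rule eval_Cn[of _ _ "[y]"]) auto

lemma eval_Cn2:
  "eval g1 xs y1 \<Longrightarrow> eval g2 xs y2 \<Longrightarrow> eval f [y1, y2] z \<Longrightarrow> eval (Cn f [g1, g2]) xs z"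
  by (rule eval_Cn[of _ _ "[y1, y2]"]) auto

definition add_recf :: recf where
  "add_recf = Pr (Proj 0) (Cn Sf [Proj 0])"

lemma eval_add_recf: "z = a + b \<Longrightarrow> eval add_recf [a, b] z"
proof (induction a arbitrary: z)
  case 0
  then show ?case unfolding add_recf_def by (auto intro!: eval_Pr0 eval_ProjI)
next
  case (Suc a)
  show ?case unfolding add_recf_def
    by (rule eval_PrS[OF Suc.IH[OF refl, unfolded add_recf_def]])
       (use Suc.prems in \<open>auto intro!: eval_Cn1 eval_ProjI eval_SI\<close>)
qed

definition mult_recf :: recf where
  "mult_recf = Pr Zf (Cn add_recf [Proj 0, Proj 2])"

lemma eval_mult_recf: "z = a * b \<Longrightarrow> eval mult_recf [a, b] z"
proof (induction a arbitrary: z)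
  case 0
  then show ?case unfolding mult_recf_def by (auto intro!: eval.intros)
next
  case (Suc a)
  show ?case unfolding mult_recf_def
    by (rule eval_PrS[OF Suc.IH[OF refl, unfolded mult_recf_def]])
       (use Suc.prems in \<open>auto intro!: eval_Cn2 eval_ProjI eval_add_recf\<close>)
qed

definition pred_recf :: recf where
  "pred_recf = Pr Zf (Proj 1)"

lemma eval_pred_recf: "eval pred_recf [a] (a - 1)"
proof (induction a)
  case 0
  then show ?case unfolding pred_recf_def by (auto intro!: eval.intros)
next
  case (Suc a)
  show ?case unfolding pred_recf_def
    by (rule eval_PrS[OF Suc[unfolded pred_recf_def]]) (auto intro!: eval_ProjI)
qed

text \<open>Truncated subtraction with the arguments swapped: \<open>[a, b] \<mapsto> b - a\<close>.\<close>
definition minus_recf :: recf where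
  "minus_recf = Pr (Proj 0) (Cn pred_recf [Proj 0])"

lemma eval_minus_recf: "eval minus_recf [a, b] (b - a)"
proof (induction a)
  case 0
  then show ?case unfolding minus_recf_def by (auto intro!: eval_Pr0 eval_ProjI)
next
  case (Suc a)
  show ?case unfolding minus_recf_def
    by (rule eval_PrS[OF Suc[unfolded minus_recf_def]])
       (auto intro!: eval_Cn1 eval_ProjI eval_pred_recf[of "b - a", simplified])
qed

definition dist_recf :: recf where
  "dist_recf = Cn add_recf [minus_recf, Cn minus_recf [Proj 1, Proj 0]]"

lemma eval_dist_recf: "eval dist_recf [a, b] ((b - a) + (a - b))"
  unfolding dist_recf_def
  by (auto intro!: eval_Cn2 eval_minus_recf eval_add_recf eval_ProjI)

definition pow2_recf :: recf where
  "pow2_recf = Pr (Cn Sf [Zf]) (Cn add_recf [Proj 0, Proj 0])"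

lemma eval_pow2_recf: "eval pow2_recf [i] (2 ^ i)"
proof (induction i)
  case 0
  then show ?case unfolding pow2_recf_def by (auto intro!: eval_Pr0 eval_Cn1 eval_Z eval_SI)
next
  case (Suc i)
  show ?case unfolding pow2_recf_def
    by (rule eval_PrS[OF Suc[unfolded pow2_recf_def]])
       (auto intro!: eval_Cn2 eval_ProjI eval_add_recf)
qed

lemma str_code_snoc: "str_code (s @ [b]) = str_code s + 2 ^ length s * (if b then 2 else 1)"
  by (induction s) auto

lemma str_code_inj: "inj str_code"
proof (rule injI)
  show "str_code s = str_code t \<Longrightarrow> s = t" for s t
  proof (induction s arbitrary: t)
    case Nil
    then show ?case by (cases t) (auto split: if_splits)
  next
    case (Cons a s)
    then show ?case by (cases t) (auto split: if_splits, presburger+)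
  qed
qed

lemma restr_Suc: "restr X (Suc i) = restr X i @ [X i]"
  by (simp add: restr_def)

text \<open>Given a program \<open>c\<close> for the characteristic function of \<open>X\<close>, computes the code of \<open>X\<restriction>i\<close>
  via \<open>str_code (X\<restriction>(i+1)) = str_code (X\<restriction>i) + 2\<^sup>i (c(i) + 1)\<close>.\<close>
definition prefix_code_recf :: "recf \<Rightarrow> recf" where
  "prefix_code_recf c =
     Pr Zf (Cn add_recf [Proj 0, Cn mult_recf [Cn pow2_recf [Proj 1], Cn Sf [Cn c [Proj 1]]]])"

lemma eval_prefix_code_recf:
  assumes c: "\<forall>n. eval c [n] (if X n then 1 else 0)"
  shows "eval (prefix_code_recf c) [i] (str_code (restr X i))"
proof (induction i)
  case 0
  then show ?case unfolding prefix_code_recf_def by (auto intro!: eval.intros simp: restr_def)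
next
  case (Suc i)
  define v :: nat where "v = (if X i then 1 else 0)"
  have code: "str_code (restr X (Suc i)) = str_code (restr X i) + 2 ^ i * Suc v"
    unfolding restr_Suc str_code_snoc v_def by (simp add: restr_def)
  let ?r = "str_code (restr X i)"
  have arg: "eval (Proj 1) [?r, i] i"
    by (simp add: eval_ProjI)
  have pow: "eval (Cn pow2_recf [Proj 1]) [?r, i] (2 ^ i)"
    by (rule eval_Cn1[OF arg eval_pow2_recf])
  have "eval c [i] v"
    using c by (simp add: v_def)
  then have bit: "eval (Cn Sf [Cn c [Proj 1]]) [?r, i] (Suc v)"
    by (intro eval_Cn1[OF eval_Cn1[OF arg] eval_SI]) simp_all
  have "eval (Cn mult_recf [Cn pow2_recf [Proj 1], Cn Sf [Cn c [Proj 1]]]) [?r, i] (2 ^ i * Suc v)"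
    by (rule eval_Cn2[OF pow bit eval_mult_recf[OF refl]])
  then show ?case unfolding code prefix_code_recf_def
    by (intro eval_PrS[OF Suc[unfolded prefix_code_recf_def]] eval_Cn2[OF _ _ eval_add_recf[OF refl]])
       (simp add: eval_ProjI)
qed

text \<open>Unbounded search for a zero of the distance between \<open>str_code (X\<restriction>i)\<close> and the input.\<close>
definition prefix_test_recf :: "recf \<Rightarrow> recf" where
  "prefix_test_recf c = Mn (Cn dist_recf [Cn (prefix_code_recf c) [Proj 1], Proj 2])"

lemma prefix_test_recf_halts_iff:
  assumes c: "\<forall>n. eval c [n] (if X n then 1 else 0)"
  shows "(\<exists>y. eval (prefix_test_recf c) [i, str_code \<sigma>] y) \<longleftrightarrow> \<sigma> = restr X i"
proof -
  let ?dist = "Cn dist_recf [Cn (prefix_code_recf c) [Proj 1], Proj 2]"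
  have dist: "eval ?dist [n, i, x] ((x - str_code (restr X i)) + (str_code (restr X i) - x))"
    for n x
    by (auto intro!: eval_Cn2 eval_Cn1 eval_ProjI eval_dist_recf eval_prefix_code_recf[OF c])
  show ?thesis
  proof
    assume "\<exists>y. eval (prefix_test_recf c) [i, str_code \<sigma>] y"
    then obtain y where "eval (prefix_test_recf c) [i, str_code \<sigma>] y" ..
    then have "eval ?dist [y, i, str_code \<sigma>] 0"
      unfolding prefix_test_recf_def by (cases rule: eval.cases) auto
    from eval_deterministic[OF this dist] have "str_code \<sigma> = str_code (restr X i)"
      by simp
    then show "\<sigma> = restr X i" using str_code_inj by (simp add: inj_eq)
  next
    assume "\<sigma> = restr X i"
    then have "eval (prefix_test_recf c) [i, str_code \<sigma>] 0"
      unfolding prefix_test_recf_def using dist[of 0 "str_code \<sigma>"] by (auto intro!: eval_Mn)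
    then show "\<exists>y. eval (prefix_test_recf c) [i, str_code \<sigma>] y" by blast
  qed
qed

lemma uniformly_ce_prefixes:
  assumes "computable_seq X"
  shows "uniformly_ce (\<lambda>i. {restr X i})"
proof -
  obtain c where "\<forall>n. eval c [n] (if X n then 1 else 0)"
    using assms unfolding computable_seq_def by blast
  then show ?thesis
    unfolding uniformly_ce_def using prefix_test_recf_halts_iff by blast
qed

lemma rho_set_singleton: "rho_set \<rho> {\<sigma>} = ennreal (\<rho> \<sigma>)"
  by (simp add: rho_set_def)

lemma in_cyl_set_prefix: "X \<in> cyl_set {restr X i}"
  by (simp add: cyl_set_def cyl_def restr_def)

lemma W2R_prefixes_not_null:
  assumes "computable_seq X" and "X \<in> W2R \<rho>"
  shows "\<not> (\<lambda>n. \<rho> (restr X n)) \<longlonglongrightarrow> 0"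
proof
  assume "(\<lambda>n. \<rho> (restr X n)) \<longlonglongrightarrow> 0"
  then have "(\<lambda>i. rho_set \<rho> {restr X i}) \<longlonglongrightarrow> 0"
    unfolding rho_set_singleton by (intro tendsto_ennrealI[of _ 0, simplified])
  with assms have "X \<notin> (\<Inter>i. cyl_set {restr X i})"
    using uniformly_ce_prefixes unfolding W2R_def by blast
  then show False using in_cyl_set_prefix by blast
qed

lemma semimeasure_nonneg: "semimeasure \<rho> \<Longrightarrow> 0 \<le> \<rho> \<sigma>"
  by (simp add: semimeasure_def)

lemma semimeasure_extension_le:
  assumes "semimeasure \<rho>"
  shows "\<rho> (\<sigma> @ [b]) \<le> \<rho> \<sigma>"
proof -
  have "\<rho> (\<sigma> @ [False]) + \<rho> (\<sigma> @ [True]) \<le> \<rho> \<sigma>"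
    using assms unfolding semimeasure_def by blast
  then show ?thesis
    using semimeasure_nonneg[OF assms, of "\<sigma> @ [False]"] semimeasure_nonneg[OF assms, of "\<sigma> @ [True]"]
    by (cases b) auto
qed

lemma semimeasure_prefixes_tendsto_INF:
  assumes "semimeasure \<rho>"
  shows "(\<lambda>n. \<rho> (restr X n)) \<longlonglongrightarrow> (INF n. \<rho> (restr X n))"
proof (rule LIMSEQ_decseq_INF)
  show "bdd_below (range (\<lambda>n. \<rho> (restr X n)))"
    using semimeasure_nonneg[OF assms] by (intro bdd_belowI[of _ 0]) auto
  show "decseq (\<lambda>n. \<rho> (restr X n))"
    using semimeasure_extension_le[OF assms] by (intro decseq_SucI) (simp add: restr_Suc)
qed

theorem proposition5p10:
  fixes \<rho> :: "bool list \<Rightarrow> real" and X :: "nat \<Rightarrow> bool"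
  assumes "semimeasure \<rho>" and "left_ce \<rho>"
    and "computable_seq X" and "X \<in> W2R \<rho>"
  shows "(INF n. \<rho> (restr X n)) > 0"
proof -
  have "(INF n. \<rho> (restr X n)) \<ge> 0"
    using semimeasure_nonneg[OF assms(1)] by (intro cINF_greatest) auto
  moreover have "(INF n. \<rho> (restr X n)) \<noteq> 0"
    using semimeasure_prefixes_tendsto_INF[OF assms(1), of X] W2R_prefixes_not_null[OF assms(3,4)]
    by metis
  ultimately show ?thesis by linarith
qed

end
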